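(* Let $d\in\mathbb{N}$ and let $S\subset\mathbb{R}^d$ be a measurable set with complement $S^c=\mathbb{R}^d\setminus S$. Then $S$ is thick if and only if $\beta(S^c)<1$, where \[ \beta(S^c):=\lim_{r\to +\infty}\ \sup_{x\in\mathbb{R}^d} \frac{|S^c\cap B(x,r)|}{|B(x,r)|}. \]
   Context: $|\cdot|$ denotes Lebesgue measure on $\mathbb{R}^d$ and $B(x,r)$ the open Euclidean ball of radius $r>0$ centered at $x$. A set $S\subset\mathbb{R}^d$ is called thick if it is measurable and there exist $\gamma\in(0,1]$ and $a=(a_1,\dots,a_d)\in(0,\infty)^d$ such that $|S\cap (x+[0,a_1]\times\dots\times[0,a_d])|\ge \gamma\prod_{j=1}^d a_j$ for all $x\in\mathbb{R}^d$; equivalently, there exist $\gamma\in(0,1]$ and $r>0$ such that $|S\cap B(x,r)|\ge\gamma|B(x,r)|$ for all $x\in\mathbb{R}^d$. *)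

theory Defs
  imports "HOL-Analysis.Analysis"
begin

definition thick :: "'a::euclidean_space set \<Rightarrow> bool" where
  "thick S \<longleftrightarrow> S \<in> sets lebesgue \<and>
     (\<exists>\<gamma>::real. \<exists>a::'a. 0 < \<gamma> \<and> \<gamma> \<le> 1 \<and> (\<forall>i\<in>Basis. 0 < a \<bullet> i) \<and>
       (\<forall>x. measure lebesgue (S \<inter> cbox x (x + a)) \<ge> \<gamma> * (\<Prod>i\<in>Basis. a \<bullet> i)))"

definition beta :: "'a::euclidean_space set \<Rightarrow> real" where
  "beta E = Lim at_top (\<lambda>r::real. SUP x. measure lebesgue (E \<inter> ball x r) / measure lebesgue (ball x r))"

end

theory Submission
  imports Defs
begin

(* Let f(r) = sup_x |E \<inter> B(x,r)| / |B(x,r)| be the largest density of E = -S in balls of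
   radius r.  Counting the pairs (z, y) with z \<in> E, y \<in> B(x,R+r) and |z - y| < r in two
   ways (Fubini) gives f(R) \<le> f(r) ((R+r)/R)^d, so f converges to its infimum and
   \<beta>(E) < 1 iff f(r) < 1 for some r.  As |S \<inter> B(x,r)| = |B(x,r)| - |E \<inter> B(x,r)|, f(r) < 1
   says that S has mass bounded below uniformly in all balls of some radius, which is
   thickness once boxes and balls are compared. *)

lemma emeasure_Int_ball_le_enlarged_ball:
  fixes E :: "'a::euclidean_space set"
  assumes E [measurable]: "E \<in> sets borel" and r: "0 < r"
    and dens: "\<And>y. emeasure lborel (E \<inter> ball y r) \<le> c * emeasure lborel (ball y r)"
  shows "emeasure lborel (E \<inter> ball x R) \<le> c * emeasure lborel (ball x (R + r))"
proof -
  define V where "V = emeasure lborel (ball (0::'a) r)"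
  have V_ball: "emeasure lborel (ball y r) = V" for y :: 'a
    using r by (simp add: V_def emeasure_ball)
  have V: "V \<noteq> 0" "V \<noteq> top"
    using r unit_ball_vol_pos[of "real DIM('a)"]
    by (auto simp: V_def emeasure_ball simp del: unit_ball_vol_pos)
  define B where "B = ball x (R + r)"
  have [measurable]: "B \<in> sets borel"
    by (simp add: B_def)
  define P where "P = {p. fst p \<in> E \<and> snd p \<in> B \<and> dist (fst p) (snd p) < r}"
  have P: "P \<in> sets (lborel \<Otimes>\<^sub>M lborel)"
  proof -
    have [measurable]: "(\<lambda>p::'a \<times> 'a. dist (fst p) (snd p)) \<in> borel_measurable (borel \<Otimes>\<^sub>M borel)"
      by measurable
    have "Measurable.pred (borel \<Otimes>\<^sub>M borel) (\<lambda>p::'a \<times> 'a. p \<in> P)"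
      unfolding P_def by measurable
    then show ?thesis
      by (simp add: pred_def space_pair_measure)
  qed
  have "V * emeasure lborel (E \<inter> ball x R) = (\<integral>\<^sup>+z. V * indicator (E \<inter> ball x R) z \<partial>lborel)"
    by (simp add: nn_integral_cmult_indicator)
  also have "\<dots> \<le> (\<integral>\<^sup>+z. emeasure lborel (Pair z -` P) \<partial>lborel)"
  proof (rule nn_integral_mono)
    fix z :: 'a
    have "Pair z -` P = ball z r" if "z \<in> E \<inter> ball x R"
    proof -
      have "ball z r \<subseteq> B"
        using that by (auto simp: B_def ball_subset_ball_iff dist_commute)
      then show ?thesis
        using that by (auto simp: P_def dist_commute)
    qed
    then show "V * indicator (E \<inter> ball x R) z \<le> emeasure lborel (Pair z -` P)"
      by (cases "z \<in> E \<inter> ball x R") (simp_all add: V_ball)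
  qed
  also have "\<dots> = emeasure (lborel \<Otimes>\<^sub>M lborel) P"
    by (rule lborel.emeasure_pair_measure_alt[OF P, symmetric])
  also have "\<dots> = (\<integral>\<^sup>+y. emeasure lborel ((\<lambda>z. (z, y)) -` P) \<partial>lborel)"
    by (rule lborel_pair.emeasure_pair_measure_alt2[OF P])
  also have "\<dots> = (\<integral>\<^sup>+y. emeasure lborel (E \<inter> ball y r) * indicator B y \<partial>lborel)"
  proof (rule nn_integral_cong)
    fix y :: 'a
    have "(\<lambda>z. (z, y)) -` P = (if y \<in> B then E \<inter> ball y r else {})"
      by (auto simp: P_def dist_commute)
    then show "emeasure lborel ((\<lambda>z. (z, y)) -` P) = emeasure lborel (E \<inter> ball y r) * indicator B y"
      by simp
  qed
  also have "\<dots> \<le> (\<integral>\<^sup>+y. (c * V) * indicator B y \<partial>lborel)"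
    using dens by (intro nn_integral_mono mult_right_mono) (simp_all add: V_ball)
  also have "\<dots> = V * (c * emeasure lborel B)"
    using nn_integral_cmult_indicator[of B lborel "c * V"] by (simp add: mult_ac)
  finally show ?thesis
    unfolding B_def ennreal_mult_le_mult_iff[OF V] .
qed

lemma measure_Int_ball_le_enlarged_ball:
  fixes E :: "'a::euclidean_space set"
  assumes E: "E \<in> sets lebesgue" and r: "0 < r" and c: "0 \<le> c"
    and dens: "\<And>y. measure lebesgue (E \<inter> ball y r) \<le> c * measure lebesgue (ball y r)"
  shows "measure lebesgue (E \<inter> ball x R) \<le> c * measure lebesgue (ball x (R + r))"
proof -
  obtain B N where B: "B \<in> sets borel" and N: "negligible N" and E_eq: "B \<union> N = E"
    using sets_lebesgue_almost_borel[OF E] .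
  have B_ball: "emeasure lborel (B \<inter> ball y s) = measure lebesgue (E \<inter> ball y s)" for y s
  proof -
    have "B \<inter> ball y s \<in> lmeasurable"
      using fmeasurable_Int_fmeasurable[of "ball y s" lebesgue B] B by (simp add: Int_commute)
    moreover have "measure lebesgue (E \<inter> ball y s) = measure lebesgue (B \<inter> ball y s)"
      using calculation by (rule measure_negligible_symdiff) (rule negligible_subset[OF N], use E_eq in auto)
    moreover have "emeasure lborel (B \<inter> ball y s) = emeasure lebesgue (B \<inter> ball y s)"
      using B by simp
    ultimately show ?thesis
      by (simp add: emeasure_eq_measure2)
  qed
  have ball: "emeasure lborel (ball y s) = measure lebesgue (ball y s)" for y :: 'a and s
    using emeasure_eq_measure2[OF lmeasurable_ball, of y s] by simp
  have "emeasure lborel (B \<inter> ball y r) \<le> c * emeasure lborel (ball y r)" for y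
  proof -
    have "ennreal (measure lebesgue (E \<inter> ball y r)) \<le> ennreal (c * measure lebesgue (ball y r))"
      using dens by (rule ennreal_leI)
    then show ?thesis
      using c by (simp add: B_ball ball ennreal_mult)
  qed
  from emeasure_Int_ball_le_enlarged_ball[OF B r this, of x R]
  have "ennreal (measure lebesgue (E \<inter> ball x R)) \<le> ennreal (c * measure lebesgue (ball x (R + r)))"
    using c by (simp add: B_ball ball ennreal_mult)
  then show ?thesis
    using c by (simp add: ennreal_le_iff)
qed

definition max_ball_density :: "'a::euclidean_space set \<Rightarrow> real \<Rightarrow> real" where
  "max_ball_density E r = (SUP x. measure lebesgue (E \<inter> ball x r) / measure lebesgue (ball x r))"

lemma ball_density_le_1:
  assumes "E \<in> sets lebesgue"
  shows "measure lebesgue (E \<inter> ball x r) / measure lebesgue (ball x r) \<le> 1"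
proof -
  have "measure lebesgue (E \<inter> ball x r) \<le> measure lebesgue (ball x r)"
    using assms by (intro measure_mono_fmeasurable) auto
  then show ?thesis
    by (auto simp: divide_le_eq_1)
qed

lemma ball_density_le_max_ball_density:
  "E \<in> sets lebesgue \<Longrightarrow>
    measure lebesgue (E \<inter> ball x r) / measure lebesgue (ball x r) \<le> max_ball_density E r"
  unfolding max_ball_density_def
  by (rule cSUP_upper[OF UNIV_I bdd_aboveI2[where M = 1]]) (rule ball_density_le_1)

lemma max_ball_density_nonneg: "E \<in> sets lebesgue \<Longrightarrow> 0 \<le> max_ball_density E r"
  using ball_density_le_max_ball_density[of E 0 r] by (force intro: order_trans[rotated])

lemma bdd_below_max_ball_density: "E \<in> sets lebesgue \<Longrightarrow> bdd_below (max_ball_density E ` A)"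
  using max_ball_density_nonneg by (intro bdd_belowI2)

lemma max_ball_density_enlarge:
  fixes E :: "'a::euclidean_space set"
  assumes E: "E \<in> sets lebesgue" and r: "0 < r" and R: "0 < R"
  shows "max_ball_density E R \<le> max_ball_density E r * ((R + r) / R) ^ DIM('a)"
  unfolding max_ball_density_def[of E R]
proof (rule cSUP_least)
  fix x :: 'a
  let ?f = "max_ball_density E r" and ?V = "\<lambda>s. measure lebesgue (ball x s)"
  have "measure lebesgue (E \<inter> ball y r) \<le> ?f * measure lebesgue (ball y r)" for y
    using ball_density_le_max_ball_density[OF E, of y r] r by (simp add: divide_le_eq)
  then have "measure lebesgue (E \<inter> ball x R) \<le> ?f * ?V (R + r)"
    by (rule measure_Int_ball_le_enlarged_ball[OF E r max_ball_density_nonneg[OF E]])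
  also have "?V (R + r) = ((R + r) / R) ^ DIM('a) * ?V R"
    using r R by (simp add: content_ball power_divide)
  finally show "measure lebesgue (E \<inter> ball x R) / ?V R \<le> ?f * ((R + r) / R) ^ DIM('a)"
    using R by (simp add: divide_le_eq mult_ac)
qed simp

lemma tendsto_max_ball_density:
  fixes E :: "'a::euclidean_space set"
  assumes E: "E \<in> sets lebesgue"
  shows "(max_ball_density E \<longlongrightarrow> (INF r\<in>{0<..}. max_ball_density E r)) at_top"
proof (rule order_tendstoI)
  fix a
  assume a: "a < (INF r\<in>{0<..}. max_ball_density E r)"
  show "\<forall>\<^sub>F R in at_top. a < max_ball_density E R"
    using eventually_gt_at_top[of 0]
    by eventually_elim (use a bdd_below_max_ball_density[OF E] in \<open>auto intro: less_le_trans cINF_lower\<close>)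
next
  fix a
  assume "(INF r\<in>{0<..}. max_ball_density E r) < a"
  then obtain r where r: "0 < r" and less: "max_ball_density E r < a"
    by (auto simp: cINF_less_iff bdd_below_max_ball_density[OF E])
  have "((\<lambda>R. r / R) \<longlongrightarrow> 0) at_top"
    by (rule real_tendsto_divide_at_top[OF tendsto_const filterlim_ident])
  then have "((\<lambda>R. max_ball_density E r * (1 + r / R) ^ DIM('a)) \<longlongrightarrow> max_ball_density E r * (1 + 0) ^ DIM('a)) at_top"
    by (intro tendsto_intros)
  then have "\<forall>\<^sub>F R in at_top. max_ball_density E r * (1 + r / R) ^ DIM('a) < a"
    using less by (intro order_tendstoD(2)) auto
  then show "\<forall>\<^sub>F R in at_top. max_ball_density E R < a"
    using eventually_gt_at_top[of 0]
  proof eventually_elim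
    case (elim R)
    then show ?case
      using max_ball_density_enlarge[OF E r, of R] by (simp add: add_divide_distrib)
  qed
qed

lemma beta_eq_INF_max_ball_density:
  "E \<in> sets lebesgue \<Longrightarrow> beta E = (INF r\<in>{0<..}. max_ball_density E r)"
  unfolding beta_def max_ball_density_def[symmetric]
  by (rule tendsto_Lim[OF trivial_limit_at_top_linorder tendsto_max_ball_density])

lemma beta_less_iff:
  "E \<in> sets lebesgue \<Longrightarrow> beta E < t \<longleftrightarrow> (\<exists>r>0. max_ball_density E r < t)"
  by (auto simp: beta_eq_INF_max_ball_density cINF_less_iff bdd_below_max_ball_density)

lemma max_ball_density_Compl_less_1_iff:
  fixes S :: "'a::euclidean_space set"
  assumes S: "S \<in> sets lebesgue" and r: "0 < r"
  shows "max_ball_density (- S) r < 1 \<longleftrightarrow> (\<exists>\<delta>>0. \<forall>x. \<delta> \<le> measure lebesgue (S \<inter> ball x r))"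
proof -
  define V where "V = unit_ball_vol DIM('a) * r ^ DIM('a)"
  have V: "0 < V" "measure lebesgue (ball x r) = V" for x :: 'a
    using r by (simp_all add: V_def content_ball)
  have density: "measure lebesgue (- S \<inter> ball x r) / measure lebesgue (ball x r)
      = 1 - measure lebesgue (S \<inter> ball x r) / V" for x
  proof -
    have "measure lebesgue (- S \<inter> ball x r) = measure lebesgue (ball x r - S \<inter> ball x r)"
      by (rule arg_cong[where f = "measure lebesgue"]) blast
    also have "\<dots> = V - measure lebesgue (S \<inter> ball x r)"
      using S V by (subst measurable_measure_Diff) auto
    finally show ?thesis
      using V by (simp add: diff_divide_distrib)
  qed
  show ?thesis
  proof
    assume less: "max_ball_density (- S) r < 1"
    have "(1 - max_ball_density (- S) r) * V \<le> measure lebesgue (S \<inter> ball x r)" for x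
    proof -
      have "1 - measure lebesgue (S \<inter> ball x r) / V \<le> max_ball_density (- S) r"
        using ball_density_le_max_ball_density[of "- S" x r] S
        by (simp only: density Compl_in_sets_lebesgue)
      then show ?thesis
        using V by (simp add: field_simps)
    qed
    then show "\<exists>\<delta>>0. \<forall>x. \<delta> \<le> measure lebesgue (S \<inter> ball x r)"
      using less V by (intro exI[of _ "(1 - max_ball_density (- S) r) * V"]) auto
  next
    assume "\<exists>\<delta>>0. \<forall>x. \<delta> \<le> measure lebesgue (S \<inter> ball x r)"
    then obtain \<delta> where \<delta>: "0 < \<delta>" "\<And>x. \<delta> \<le> measure lebesgue (S \<inter> ball x r)"
      by blast
    have "max_ball_density (- S) r \<le> 1 - \<delta> / V"
      unfolding max_ball_density_def density
      using \<delta>(2) V by (intro cSUP_least) (auto intro: divide_right_mono)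
    also have "\<dots> < 1"
      using \<delta>(1) V by simp
    finally show "max_ball_density (- S) r < 1" .
  qed
qed

lemma cbox_subset_ball_midpoint:
  fixes x a :: "'a::euclidean_space"
  assumes R: "(\<Sum>i\<in>Basis. a \<bullet> i) < 2 * R"
  shows "cbox x (x + a) \<subseteq> ball (x + (1/2) *\<^sub>R a) R"
proof
  fix y
  assume y: "y \<in> cbox x (x + a)"
  let ?c = "x + (1/2) *\<^sub>R a"
  have coord: "\<bar>(y - ?c) \<bullet> i\<bar> \<le> (a \<bullet> i) / 2" if "i \<in> Basis" for i
  proof -
    have "x \<bullet> i \<le> y \<bullet> i" "y \<bullet> i \<le> x \<bullet> i + a \<bullet> i"
      using y that by (auto simp: mem_box inner_add_left)
    then show ?thesis
      unfolding inner_diff_left inner_add_left inner_scaleR_left by arith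
  qed
  have "norm (y - ?c) \<le> (\<Sum>i\<in>Basis. \<bar>(y - ?c) \<bullet> i\<bar>)"
    by (rule norm_le_l1)
  also have "\<dots> \<le> (\<Sum>i\<in>Basis. (a \<bullet> i) / 2)"
    using coord by (rule sum_mono)
  also have "\<dots> < R"
    using R by (simp add: sum_divide_distrib[symmetric])
  finally show "y \<in> ball ?c R"
    by (simp add: dist_norm norm_minus_commute)
qed

lemma ball_subset_cube:
  fixes x :: "'a::euclidean_space"
  shows "ball (x + r *\<^sub>R One) r \<subseteq> cbox x (x + (2 * r) *\<^sub>R One)"
proof
  fix y
  assume y: "y \<in> ball (x + r *\<^sub>R One) r"
  have "\<bar>y \<bullet> i - x \<bullet> i - r\<bar> < r" if "i \<in> Basis" for i
    using Basis_le_norm[OF that, of "y - (x + r *\<^sub>R One)"] y that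
    by (simp add: dist_norm norm_minus_commute inner_diff_left inner_add_left algebra_simps)
  then show "y \<in> cbox x (x + (2 * r) *\<^sub>R One)"
    unfolding mem_box by (force simp: inner_add_left abs_less_iff)
qed

lemma measure_Int_mono:
  assumes "S \<in> sets lebesgue" "A \<subseteq> B" "A \<in> sets lebesgue" "B \<in> lmeasurable"
  shows "measure lebesgue (S \<inter> A) \<le> measure lebesgue (S \<inter> B)"
proof (rule measure_mono_fmeasurable)
  show "S \<inter> B \<in> lmeasurable"
    using fmeasurable_Int_fmeasurable[of B lebesgue S] assms by (simp add: Int_commute)
qed (use assms in auto)

lemma thick_iff_measure_Int_ball_bounded_below:
  fixes S :: "'a::euclidean_space set"
  assumes S: "S \<in> sets lebesgue"
  shows "thick S \<longleftrightarrow> (\<exists>r>0. \<exists>\<delta>>0. \<forall>x. \<delta> \<le> measure lebesgue (S \<inter> ball x r))"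
proof
  assume "thick S"
  then obtain \<gamma> :: real and a :: 'a where \<gamma>: "0 < \<gamma>" and a_pos: "\<forall>i\<in>Basis. 0 < a \<bullet> i"
    and mass: "\<And>x. \<gamma> * (\<Prod>i\<in>Basis. a \<bullet> i) \<le> measure lebesgue (S \<inter> cbox x (x + a))"
    unfolding thick_def by blast
  define R where "R = (\<Sum>i\<in>Basis. a \<bullet> i)"
  have R: "0 < R"
    unfolding R_def using a_pos by (intro sum_pos) auto
  have "\<gamma> * (\<Prod>i\<in>Basis. a \<bullet> i) \<le> measure lebesgue (S \<inter> ball x R)" for x
  proof -
    let ?x0 = "x - (1/2) *\<^sub>R a"
    have "cbox ?x0 (?x0 + a) \<subseteq> ball (?x0 + (1/2) *\<^sub>R a) R"
      using R by (intro cbox_subset_ball_midpoint) (simp add: R_def)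
    also have "?x0 + (1/2) *\<^sub>R a = x"
      by simp
    finally have "measure lebesgue (S \<inter> cbox ?x0 (?x0 + a)) \<le> measure lebesgue (S \<inter> ball x R)"
      by (intro measure_Int_mono[OF S]) auto
    then show ?thesis
      using mass[of ?x0] by linarith
  qed
  moreover have "0 < \<gamma> * (\<Prod>i\<in>Basis. a \<bullet> i)"
    using \<gamma> a_pos by (simp add: prod_pos)
  ultimately show "\<exists>r>0. \<exists>\<delta>>0. \<forall>x. \<delta> \<le> measure lebesgue (S \<inter> ball x r)"
    using R by blast
next
  assume "\<exists>r>0. \<exists>\<delta>>0. \<forall>x. \<delta> \<le> measure lebesgue (S \<inter> ball x r)"
  then obtain r \<delta> where r: "0 < r" and \<delta>: "0 < \<delta>"
    and mass: "\<And>x. \<delta> \<le> measure lebesgue (S \<inter> ball x r)"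
    by blast
  define a :: 'a where "a = (2 * r) *\<^sub>R One"
  define \<gamma> where "\<gamma> = min 1 (\<delta> / (2 * r) ^ DIM('a))"
  have a_Basis: "a \<bullet> i = 2 * r" if "i \<in> Basis" for i
    using that by (simp add: a_def)
  then have vol: "(\<Prod>i\<in>Basis. a \<bullet> i) = (2 * r) ^ DIM('a)"
    by simp
  have "\<gamma> * (\<Prod>i\<in>Basis. a \<bullet> i) \<le> measure lebesgue (S \<inter> cbox x (x + a))" for x
  proof -
    have "\<gamma> * (\<Prod>i\<in>Basis. a \<bullet> i) \<le> \<delta>"
      unfolding vol \<gamma>_def using r by (simp add: min_def field_simps)
    also have "\<dots> \<le> measure lebesgue (S \<inter> ball (x + r *\<^sub>R One) r)"
      by (rule mass)
    also have "\<dots> \<le> measure lebesgue (S \<inter> cbox x (x + a))"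
      using S ball_subset_cube[of x r] unfolding a_def by (intro measure_Int_mono) auto
    finally show ?thesis .
  qed
  moreover have "0 < \<gamma>" "\<gamma> \<le> 1" "\<forall>i\<in>Basis. 0 < a \<bullet> i"
    using r \<delta> a_Basis by (simp_all add: \<gamma>_def)
  ultimately show "thick S"
    unfolding thick_def using S by blast
qed

theorem lemma2p3:
  fixes S :: "'a::euclidean_space set"
  assumes "S \<in> sets lebesgue"
  shows "thick S \<longleftrightarrow> beta (- S) < 1"
proof -
  have "thick S \<longleftrightarrow> (\<exists>r>0. \<exists>\<delta>>0. \<forall>x. \<delta> \<le> measure lebesgue (S \<inter> ball x r))"
    by (rule thick_iff_measure_Int_ball_bounded_below[OF assms])
  also have "\<dots> \<longleftrightarrow> (\<exists>r>0. max_ball_density (- S) r < 1)"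
    using max_ball_density_Compl_less_1_iff[OF assms] by auto
  also have "\<dots> \<longleftrightarrow> beta (- S) < 1"
    using assms by (simp add: beta_less_iff Compl_in_sets_lebesgue)
  finally show ?thesis .
qed

end
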